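(* Let $(a_i)_{i\ge1}$ be a sequence of mild signature, let $(b_i)_{i\ge1}$ be any sequence of integers, and let $A$ be the associated replacement sequence. If $\alpha$ is a real number with $\sum_{i\ge1}\|\alpha b_i\|<\infty$, then the sequence of Weyl sums $x_n=\frac1n\sum_{i=0}^{n-1}e(\alpha A(i))$ converges to some complex number as $n\to\infty$.
   Context: $e(x)=e^{2\pi i x}$ and $\|x\|$ is the distance from $x$ to the nearest integer. Greedy representation: given an increasing sequence of positive integers $(a_i)$ with $a_1=1$, the base-$a_i$ representation of $n\ge0$ is obtained by repeatedly subtracting from what remains the largest $a_i$ that is at most what remains (the same $a_i$ may be used more than once), until $0$ is reached; this writes $n$ as a sum of terms $a_i$ with multiplicities. Mild signature: $(a_i)$ is an increasing sequence of positive integers with $a_1=1$ such that (1) there is a constant $L$ such that for every $n$, greedily writing $a_n$ as a sum of terms among $a_1,\dots,a_{n-1}$ (repeatedly subtracting the largest $a_i$ with $i\le n-1$ that is at most what remains) uses only $a_{n-1},\dots,a_{n-L}$, giving $a_n=c_1a_{n-1}+\dots+c_La_{n-L}$ with integers $c_j\ge0$ (which may depend on $n$); and (2) there are $r,s>1$ with $ra_n<a_{n+1}<sa_n$ for all $n$. Replacement sequence: $A(n)$ is obtained by writing $n$ in its greedy base-$a_i$ representation and replacing each occurrence of $a_i$ by $b_i$, i.e. if $n=\sum_i m_ia_i$ greedily then $A(n)=\sum_i m_ib_i$ (so $A(0)=0$). *)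

theory Defs
  imports "HOL-Analysis.Analysis"
begin

text \<open>Sequences are indexed from 1: only the values a 1, a 2, ... matter.\<close>

definition greedy_set :: "(nat \<Rightarrow> nat) \<Rightarrow> nat \<Rightarrow> nat \<Rightarrow> nat set" where
  "greedy_set a N m = {i \<in> {1..N}. 0 < a i \<and> a i \<le> m}"

function greedy_list :: "(nat \<Rightarrow> nat) \<Rightarrow> nat \<Rightarrow> nat \<Rightarrow> nat list" where
  "greedy_list a N m =
     (if greedy_set a N m = {} then []
      else let i = Max (greedy_set a N m) in i # greedy_list a N (m - a i))"
  by pat_completeness auto
termination
proof (relation "Wellfounded.measure (\<lambda>(a, N, m). m)")
  fix a N m i
  assume ne: "greedy_set a N m \<noteq> {}" and i: "i = Max (greedy_set a N m)"
  have "finite (greedy_set a N m)" unfolding greedy_set_def by auto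
  then have "i \<in> greedy_set a N m" using ne i Max_in by blast
  then have "0 < a i" "a i \<le> m" unfolding greedy_set_def by auto
  then show "((a, N, m - a i), a, N, m) \<in> Wellfounded.measure (\<lambda>(a, N, m). m)" by simp
qed simp

text \<open>Greedy base-(a_i) representation of n \<ge> 0 (indices used). Since a is increasing
  with a 1 = 1, every i with a i \<le> n satisfies i \<le> n, so the bound N = n is harmless.\<close>
definition base_rep :: "(nat \<Rightarrow> nat) \<Rightarrow> nat \<Rightarrow> nat list" where
  "base_rep a n = greedy_list a n n"

definition replacement :: "(nat \<Rightarrow> nat) \<Rightarrow> (nat \<Rightarrow> int) \<Rightarrow> nat \<Rightarrow> int" where
  "replacement a b n = sum_list (map b (base_rep a n))"

definition mild_signature :: "(nat \<Rightarrow> nat) \<Rightarrow> bool" where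
  "mild_signature a \<longleftrightarrow>
     a 1 = 1 \<and> strict_mono_on {1..} a \<and>
     (\<exists>L::nat. \<forall>n\<ge>2. set (greedy_list a (n - 1) (a n)) \<subseteq> {n - L..n - 1}) \<and>
     (\<exists>r s::real. r > 1 \<and> s > 1 \<and>
        (\<forall>n\<ge>1. r * real (a n) < real (a (Suc n)) \<and> real (a (Suc n)) < s * real (a n)))"

definition ee :: "real \<Rightarrow> complex" where
  "ee x = exp (2 * of_real pi * \<i> * of_real x)"

definition dist_int :: "real \<Rightarrow> real" where
  "dist_int x = \<bar>x - of_int (round x)\<bar>"

end

theory Submission
  imports Defs
begin

(* Let S(M) be the Weyl sum of the first M terms. The greedy representation of n with
   a_k <= n < a_(k+1) begins with a_k, so S(M) = S(a_k) + e(alpha b_k) S(M - a_k) whenever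
   a_k <= M <= a_(k+1). Unfolding the greedy representation a_i = c_1 a_(i-1) + ... + c_L a_(i-L)
   in this way and using |e(alpha b_k) - 1| <= 2 pi ||alpha b_k|| shows that the block means
   X_i = S(a_i) / a_i satisfy X_i = sum_j w_ij X_(i-j) + eps_i, with convex weights
   w_ij = c_j a_(i-j) / a_i, leading weight w_i1 >= 1/s, and summable errors eps_i.
   A perturbed convex recurrence of this kind converges: the maximum over a window of L
   consecutive terms can only grow by the errors, and the oscillation over such a window
   shrinks by the factor 1 - s^(-L) every L steps, up to the errors. Finally, splitting a
   general M greedily gives S(M) = z M + o(M) with z the limit of the X_i. *)

lemma ee_add: "ee (x + y) = ee x * ee y"
  unfolding ee_def by (simp add: distrib_left distrib_right exp_add mult.assoc)

lemma ee_of_int: "ee (of_int k) = 1"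
proof -
  have "ee (of_int k) = exp ((2 * of_int k * pi) * \<i>)"
    unfolding ee_def by (simp add: mult_ac)
  also have "\<dots> = 1" by (rule exp_integer_2pi) simp
  finally show ?thesis .
qed

lemma norm_ee [simp]: "norm (ee x) = 1"
proof -
  have "ee x = exp (\<i> * of_real (2 * pi * x))" unfolding ee_def by (simp add: mult_ac)
  then show ?thesis by simp
qed

lemma dist_int_nonneg [simp]: "0 \<le> dist_int x"
  by (simp add: dist_int_def)

lemma norm_ee_minus_one_le: "norm (ee x - 1) \<le> 2 * pi * dist_int x"
proof -
  define r where "r = x - of_int (round x)"
  have "ee x = ee (r + of_int (round x))" by (simp add: r_def)
  also have "\<dots> = exp (\<i> * of_real (2 * pi * r))"
    unfolding ee_add ee_of_int by (simp add: ee_def mult_ac)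
  finally have "norm (ee x - 1) = 2 * \<bar>sin (2 * pi * r / 2)\<bar>"
    by (simp only: dist_exp_i_1)
  also have "\<dots> \<le> 2 * \<bar>2 * pi * r / 2\<bar>" using abs_sin_x_le_abs_x by simp
  also have "\<dots> = 2 * pi * dist_int x" by (simp add: abs_mult dist_int_def r_def)
  finally show ?thesis .
qed

section \<open>Greedy representations\<close>

declare greedy_list.simps [simp del]

lemma greedy_list_0 [simp]: "greedy_list a N 0 = []"
  by (subst greedy_list.simps) (auto simp: greedy_set_def)

locale greedy_base =
  fixes a :: "nat \<Rightarrow> nat"
  assumes a_1: "a 1 = 1" and strict_mono_a: "strict_mono_on {1..} a"
begin

lemma a_less: "1 \<le> i \<Longrightarrow> i < j \<Longrightarrow> a i < a j"
  using strict_mono_a by (auto simp: strict_mono_on_def)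

lemma a_le: "1 \<le> i \<Longrightarrow> i \<le> j \<Longrightarrow> a i \<le> a j"
  using a_less by (metis order_le_less)

lemma index_le_a: "1 \<le> i \<Longrightarrow> i \<le> a i"
proof (induction i rule: dec_induct)
  case base then show ?case using a_1 by simp
next
  case (step n) then show ?case using a_less[of n "Suc n"] by simp
qed

lemma a_pos: "1 \<le> i \<Longrightarrow> 0 < a i"
  using index_le_a by fastforce

lemma bracketing_index_exists:
  assumes "0 < M"
  obtains k where "1 \<le> k" "a k \<le> M" "M < a (Suc k)"
proof -
  define K where "K = {k. 1 \<le> k \<and> a k \<le> M}"
  have "K \<subseteq> {..M}" using index_le_a by (auto simp: K_def intro: le_trans)
  then have "finite K" by (rule finite_subset) simp
  moreover have "1 \<in> K" using assms a_1 by (simp add: K_def)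
  ultimately have "Max K \<in> K" by (intro Max_in) auto
  moreover have "Suc (Max K) \<notin> K" using Max_ge[OF \<open>finite K\<close>, of "Suc (Max K)"] by auto
  ultimately show thesis by (intro that[of "Max K"]) (auto simp: K_def not_le)
qed

lemma greedy_list_Cons:
  assumes "1 \<le> k" "k \<le> N" "a k \<le> m" "k < N \<Longrightarrow> m < a (Suc k)"
  shows "greedy_list a N m = k # greedy_list a N (m - a k)"
proof -
  let ?G = "greedy_set a N m"
  have k: "k \<in> ?G" using assms a_pos unfolding greedy_set_def by auto
  have le_k: "i \<le> k" if "i \<in> ?G" for i
  proof (rule ccontr)
    assume "\<not> i \<le> k"
    then have "k < N" "a (Suc k) \<le> a i" using that a_le[of "Suc k" i] by (auto simp: greedy_set_def)
    then show False using assms(4) that by (auto simp: greedy_set_def)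
  qed
  have "finite ?G" by (simp add: greedy_set_def)
  then have "Max ?G = k" using le_k k by (rule Max_eqI)
  then show ?thesis using k by (subst greedy_list.simps) (simp add: Let_def, blast)
qed

lemma greedy_first_index:
  assumes "1 \<le> N" "0 < m"
  obtains k where "1 \<le> k" "k \<le> N" "a k \<le> m" "k < N \<Longrightarrow> m < a (Suc k)"
proof -
  obtain k where k: "1 \<le> k" "a k \<le> m" "m < a (Suc k)"
    using bracketing_index_exists assms(2) by blast
  show thesis
  proof (cases "k \<le> N")
    case True then show ?thesis using k that by blast
  next
    case False then show ?thesis using k that[of N] a_le[of N k] assms(1) by auto
  qed
qed

lemma greedy_list_bound_indep:
  "m \<le> N \<Longrightarrow> m \<le> N' \<Longrightarrow> greedy_list a N m = greedy_list a N' m"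
proof (induction m arbitrary: N N' rule: less_induct)
  case (less m)
  show ?case
  proof (cases "m = 0")
    case False
    then obtain k where k: "1 \<le> k" "a k \<le> m" "m < a (Suc k)"
      using bracketing_index_exists by blast
    then have "k \<le> m" using index_le_a le_trans by blast
    then have "greedy_list a N m = k # greedy_list a N (m - a k)"
      and "greedy_list a N' m = k # greedy_list a N' (m - a k)"
      using k less.prems by (auto intro!: greedy_list_Cons)
    moreover have "greedy_list a N (m - a k) = greedy_list a N' (m - a k)"
      using less k a_pos[of k] by simp
    ultimately show ?thesis by simp
  qed simp
qed

lemma sum_list_greedy_list:
  assumes "1 \<le> N"
  shows "(\<Sum>k\<leftarrow>greedy_list a N m. a k) = m"
proof (induction m rule: less_induct)
  case (less m)
  show ?case
  proof (cases "m = 0")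
    case False
    then obtain k where "1 \<le> k" "k \<le> N" "a k \<le> m" "k < N \<Longrightarrow> m < a (Suc k)"
      using greedy_first_index assms by blast
    then show ?thesis using less[of "m - a k"] greedy_list_Cons a_pos[of k] by simp
  qed simp
qed

lemma replacement_step:
  assumes "1 \<le> k" "a k \<le> n" "n < a (Suc k)"
  shows "replacement a b n = b k + replacement a b (n - a k)"
proof -
  have "k \<le> n" using index_le_a assms le_trans by blast
  then have "base_rep a n = k # greedy_list a n (n - a k)"
    unfolding base_rep_def using assms by (intro greedy_list_Cons) auto
  also have "greedy_list a n (n - a k) = base_rep a (n - a k)"
    unfolding base_rep_def by (rule greedy_list_bound_indep) auto
  finally show ?thesis unfolding replacement_def by simp
qed

end

section \<open>Weyl sums and the greedy recursion\<close>

locale weyl_setting = greedy_base a for a :: "nat \<Rightarrow> nat" +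
  fixes b :: "nat \<Rightarrow> int" and \<alpha> :: real
begin

definition weyl_sum :: "nat \<Rightarrow> complex" where
  "weyl_sum m = (\<Sum>n<m. ee (\<alpha> * of_int (replacement a b n)))"

definition twist :: "nat \<Rightarrow> complex" where
  "twist k = ee (\<alpha> * of_int (b k))"

definition \<theta> :: "nat \<Rightarrow> real" where
  "\<theta> k = dist_int (\<alpha> * of_int (b k))"

lemma norm_twist [simp]: "norm (twist k) = 1"
  by (simp add: twist_def)

lemma \<theta>_nonneg [simp]: "0 \<le> \<theta> k"
  by (simp add: \<theta>_def)

lemma norm_twist_minus_one_le: "norm (twist k - 1) \<le> 2 * pi * \<theta> k"
  unfolding twist_def \<theta>_def by (rule norm_ee_minus_one_le)

lemma norm_weyl_sum_le: "norm (weyl_sum m) \<le> real m"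
proof -
  have "norm (weyl_sum m) \<le> (\<Sum>n<m. norm (ee (\<alpha> * of_int (replacement a b n))))"
    unfolding weyl_sum_def by (rule norm_sum)
  then show ?thesis by simp
qed

lemma weyl_sum_split:
  assumes k: "1 \<le> k" "a k \<le> M" "M \<le> a (Suc k)"
  shows "weyl_sum M = weyl_sum (a k) + twist k * weyl_sum (M - a k)"
proof -
  let ?f = "\<lambda>n. ee (\<alpha> * of_int (replacement a b n))"
  have "weyl_sum M = weyl_sum (a k) + (\<Sum>n\<in>{a k..<M}. ?f n)"
    unfolding weyl_sum_def using k by (metis atLeast0LessThan le0 sum.atLeastLessThan_concat)
  also have "(\<Sum>n\<in>{a k..<M}. ?f n) = (\<Sum>u<M - a k. ?f (u + a k))"
    by (rule sum.reindex_bij_witness[of _ "\<lambda>u. u + a k" "\<lambda>n. n - a k"]) (use k in auto)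
  also have "\<dots> = (\<Sum>u<M - a k. twist k * ?f u)"
  proof (rule sum.cong[OF refl])
    fix u assume "u \<in> {..<M - a k}"
    then have "replacement a b (u + a k) = b k + replacement a b u"
      using replacement_step[of k "u + a k"] k by simp
    then show "?f (u + a k) = twist k * ?f u"
      by (simp add: twist_def distrib_left ee_add)
  qed
  finally show ?thesis unfolding weyl_sum_def by (simp add: sum_distrib_left)
qed

primrec twisted_sum :: "nat list \<Rightarrow> complex" where
  "twisted_sum [] = 0"
| "twisted_sum (k # ks) = weyl_sum (a k) + twist k * twisted_sum ks"

lemma weyl_sum_greedy:
  assumes "1 \<le> N" "m \<le> a (Suc N)"
  shows "weyl_sum m = twisted_sum (greedy_list a N m)"
  using assms(2)
proof (induction m rule: less_induct)
  case (less m)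
  show ?case
  proof (cases "m = 0")
    case False
    then obtain k where k: "1 \<le> k" "k \<le> N" "a k \<le> m" "k < N \<Longrightarrow> m < a (Suc k)"
      using greedy_first_index assms(1) by blast
    then have "m \<le> a (Suc k)" using less.prems by (cases "k < N") auto
    then have "weyl_sum m = weyl_sum (a k) + twist k * weyl_sum (m - a k)"
      using k by (intro weyl_sum_split) auto
    also have "weyl_sum (m - a k) = twisted_sum (greedy_list a N (m - a k))"
      using less k a_pos[of k] by simp
    finally show ?thesis using greedy_list_Cons[OF k] by simp
  qed (simp add: weyl_sum_def)
qed

lemma norm_twisted_sum_le: "norm (twisted_sum ks) \<le> real (\<Sum>k\<leftarrow>ks. a k)"
proof (induction ks)
  case (Cons k ks)
  have "norm (twisted_sum (k # ks)) \<le> norm (weyl_sum (a k)) + norm (twist k * twisted_sum ks)"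
    by (simp add: norm_triangle_ineq)
  also have "\<dots> \<le> real (a k) + real (\<Sum>k\<leftarrow>ks. a k)"
    using norm_weyl_sum_le[of "a k"] Cons by (simp add: norm_mult)
  finally show ?case by simp
qed simp

lemma twisted_sum_approx:
  "norm (twisted_sum ks - (\<Sum>k\<leftarrow>ks. weyl_sum (a k)))
     \<le> (\<Sum>k\<leftarrow>ks. 2 * pi * \<theta> k) * real (\<Sum>k\<leftarrow>ks. a k)"
proof (induction ks)
  case (Cons k ks)
  define D where "D = (\<Sum>k\<leftarrow>ks. 2 * pi * \<theta> k)"
  define A where "A = real (\<Sum>k\<leftarrow>ks. a k)"
  have D: "0 \<le> D" unfolding D_def by (rule sum_list_nonneg) auto
  have "twisted_sum (k # ks) - (\<Sum>k\<leftarrow>k # ks. weyl_sum (a k))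
      = (twist k - 1) * twisted_sum ks + (twisted_sum ks - (\<Sum>k\<leftarrow>ks. weyl_sum (a k)))"
    by (simp add: algebra_simps)
  then have "norm (twisted_sum (k # ks) - (\<Sum>k\<leftarrow>k # ks. weyl_sum (a k)))
      \<le> norm (twist k - 1) * norm (twisted_sum ks) + norm (twisted_sum ks - (\<Sum>k\<leftarrow>ks. weyl_sum (a k)))"
    by (metis norm_mult norm_triangle_ineq)
  also have "\<dots> \<le> 2 * pi * \<theta> k * A + D * A"
    using norm_twist_minus_one_le[of k] norm_twisted_sum_le[of ks] Cons
    unfolding A_def D_def by (intro add_mono mult_mono) auto
  also have "\<dots> \<le> (2 * pi * \<theta> k + D) * (real (a k) + A)"
    using D by (simp add: algebra_simps)
  finally show ?case by (simp add: A_def D_def)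
qed simp

end

section \<open>Perturbed convex recurrences\<close>

lemma convergent_if_eventually_decreasing_bounded:
  fixes U :: "nat \<Rightarrow> real"
  assumes "\<And>i. i0 \<le> i \<Longrightarrow> U (Suc i) \<le> U i" and "\<And>i. \<bar>U i\<bar> \<le> C"
  shows "convergent U"
proof -
  have "decseq (\<lambda>n. U (n + i0))" using assms(1) by (intro decseq_SucI) simp
  moreover have "Bseq (\<lambda>n. U (n + i0))" using assms(2) by (intro BseqI') simp
  ultimately have "convergent (\<lambda>n. U (n + i0))" by (simp add: Bseq_monoseq_convergent monoseq_iff)
  then show ?thesis by (simp add: convergent_ignore_initial_segment)
qed

locale convex_recurrence =
  fixes x e :: "nat \<Rightarrow> real" and w :: "nat \<Rightarrow> nat \<Rightarrow> real" and L i0 :: nat and \<delta> B :: real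
  assumes L_pos: "1 \<le> L" and L_le_i0: "L \<le> i0"
    and \<delta>_pos: "0 < \<delta>" and \<delta>_le_1: "\<delta> \<le> 1"
    and weight_nonneg: "\<And>i j. i0 \<le> i \<Longrightarrow> j \<in> {1..L} \<Longrightarrow> 0 \<le> w i j"
    and weight_sum: "\<And>i. i0 \<le> i \<Longrightarrow> (\<Sum>j=1..L. w i j) = 1"
    and lead_weight: "\<And>i. i0 \<le> i \<Longrightarrow> \<delta> \<le> w i 1"
    and recurrence: "\<And>i. i0 \<le> i \<Longrightarrow> x i = (\<Sum>j=1..L. w i j * x (i - j)) + e i"
    and summable_error: "summable (\<lambda>i. \<bar>e i\<bar>)"
    and bounded: "\<And>i. \<bar>x i\<bar> \<le> B"
begin

lemma convex_recurrence_uminus: "convex_recurrence (\<lambda>i. - x i) (\<lambda>i. - e i) w L i0 \<delta> B"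
proof
  fix i assume "i0 \<le> i"
  then show "- x i = (\<Sum>j = 1..L. w i j * - x (i - j)) + - e i"
    using recurrence[of i] by (simp add: sum_negf)
qed (use L_pos L_le_i0 \<delta>_pos \<delta>_le_1 weight_nonneg weight_sum lead_weight summable_error bounded in auto)

definition tail :: "nat \<Rightarrow> real" where
  "tail j = (\<Sum>i. \<bar>e i\<bar>) - (\<Sum>i<j. \<bar>e i\<bar>)"

lemma tail_Suc: "tail (Suc j) = tail j - \<bar>e j\<bar>"
  unfolding tail_def by simp

lemma tail_nonneg: "0 \<le> tail j"
  unfolding tail_def using sum_le_suminf[OF summable_error, of "{..<j}"] by auto

lemma tail_antimono: "i \<le> l \<Longrightarrow> tail l \<le> tail i"
  unfolding tail_def by (simp add: sum_mono2)

lemma tail_tendsto_0: "tail \<longlonglongrightarrow> 0"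
proof -
  have "(\<lambda>j. (\<Sum>i. \<bar>e i\<bar>) - (\<Sum>i<j. \<bar>e i\<bar>)) \<longlonglongrightarrow> (\<Sum>i. \<bar>e i\<bar>) - (\<Sum>i. \<bar>e i\<bar>)"
    by (intro tendsto_intros summable_LIMSEQ summable_error)
  then show ?thesis unfolding tail_def by simp
qed

lemma recurrence_le:
  assumes "i0 \<le> l" "\<And>j. j \<in> {1..L} \<Longrightarrow> x (l - j) \<le> h"
  shows "x l \<le> h + \<bar>e l\<bar>"
proof -
  have "(\<Sum>j=1..L. w l j * x (l - j)) \<le> (\<Sum>j=1..L. w l j * h)"
    using assms weight_nonneg by (intro sum_mono mult_left_mono) auto
  also have "\<dots> = h" using weight_sum[OF assms(1)] by (simp add: sum_distrib_right[symmetric])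
  finally show ?thesis using recurrence[OF assms(1)] by linarith
qed

lemma recurrence_lead_ge:
  assumes "i0 \<le> l" "\<And>j. j \<in> {1..L} \<Longrightarrow> c \<le> x (l - j)"
  shows "\<delta> * (x (l - 1) - c) - \<bar>e l\<bar> \<le> x l - c"
proof -
  have "x l - c = (\<Sum>j=1..L. w l j * (x (l - j) - c)) + e l"
    using recurrence[OF assms(1)] weight_sum[OF assms(1)]
    by (simp add: sum_subtractf right_diff_distrib sum_distrib_right[symmetric])
  moreover have "w l 1 * (x (l - 1) - c) \<le> (\<Sum>j=1..L. w l j * (x (l - j) - c))"
    using assms weight_nonneg L_pos by (intro member_le_sum) auto
  moreover have "\<delta> * (x (l - 1) - c) \<le> w l 1 * (x (l - 1) - c)"
    using assms L_pos lead_weight by (intro mult_right_mono) auto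
  ultimately show ?thesis by linarith
qed

lemma stays_below:
  assumes "i0 \<le> i" "\<And>q. q \<in> {i + 1 - L..i} \<Longrightarrow> x q \<le> h" "i + 1 - L \<le> l"
  shows "x l \<le> h + tail (i + 1)"
proof -
  have below: "x (i + n) \<le> h + tail (i + 1) - tail (i + n + 1)" for n
  proof (induction n rule: less_induct)
    case (less n)
    show ?case
    proof (cases n)
      case 0
      then show ?thesis using assms(2)[of i] L_pos by simp
    next
      case (Suc m)
      have "x (i + n - j) \<le> h + tail (i + 1) - tail (i + n)" if j: "j \<in> {1..L}" for j
      proof (cases "i + n - j \<le> i")
        case True
        then have "x (i + n - j) \<le> h" by (intro assms(2)) (use j Suc in auto)
        then show ?thesis using tail_antimono[of "i + 1" "i + n"] Suc by simp
      next
        case False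
        then have "x (i + (n - j)) \<le> h + tail (i + 1) - tail (i + (n - j) + 1)"
          using j by (intro less) auto
        moreover have "tail (i + n) \<le> tail (i + (n - j) + 1)" using j False by (intro tail_antimono) auto
        ultimately show ?thesis using j False by simp
      qed
      then have "x (i + n) \<le> h + tail (i + 1) - tail (i + n) + \<bar>e (i + n)\<bar>"
        using recurrence_le assms(1) by simp
      then show ?thesis using tail_Suc[of "i + n"] by simp
    qed
  qed
  show ?thesis
  proof (cases "l \<le> i")
    case True
    then show ?thesis using assms(2,3) tail_nonneg[of "i + 1"] by fastforce
  next
    case False
    then show ?thesis using below[of "l - i"] tail_nonneg[of "l + 1"] by simp
  qed
qed

lemma stays_above:
  assumes "i0 \<le> i" "\<And>q. q \<in> {i + 1 - L..i} \<Longrightarrow> c \<le> x q" "i + 1 - L \<le> l"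
  shows "c - tail (i + 1) \<le> x l"
proof -
  interpret neg: convex_recurrence "\<lambda>i. - x i" "\<lambda>i. - e i" w L i0 \<delta> B
    by (rule convex_recurrence_uminus)
  have "neg.tail = tail" unfolding neg.tail_def tail_def by simp
  then show ?thesis using neg.stays_below[OF assms(1) _ assms(3), of "- c"] assms(2) by force
qed

lemma lower_bound_decay:
  assumes "i0 \<le> i" "\<And>q. q \<in> {i + 1 - L..i} \<Longrightarrow> c \<le> x q"
  defines "lo \<equiv> c - tail (i + 1)"
  shows "\<delta> ^ k * (x i - lo) - (tail (i + 1) - tail (i + k + 1)) \<le> x (i + k) - lo"
proof (induction k)
  case (Suc k)
  let ?l = "i + Suc k"
  have "lo \<le> x (?l - j)" if "j \<in> {1..L}" for j
    unfolding lo_def by (intro stays_above[OF assms(1,2)]) (use that in auto)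
  then have "\<delta> * (x (?l - 1) - lo) - \<bar>e ?l\<bar> \<le> x ?l - lo"
    using recurrence_lead_ge[of ?l lo] assms(1) by simp
  moreover have "\<delta> * (\<delta> ^ k * (x i - lo) - (tail (i + 1) - tail (i + k + 1)))
      \<le> \<delta> * (x (i + k) - lo)"
    using Suc.IH \<delta>_pos by (intro mult_left_mono) auto
  moreover have "\<delta> * (tail (i + 1) - tail (i + k + 1)) \<le> tail (i + 1) - tail (i + k + 1)"
    using tail_antimono[of "i + 1" "i + k + 1"] \<delta>_le_1 \<delta>_pos by (simp add: mult_left_le_one_le)
  moreover have "tail (?l + 1) = tail (i + k + 1) - \<bar>e ?l\<bar>" using tail_Suc[of ?l] by simp
  ultimately show ?case by (simp add: algebra_simps)
qed simp

definition win_max :: "nat \<Rightarrow> real" where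
  "win_max i = Max (x ` {i + 1 - L..i})"

definition win_min :: "nat \<Rightarrow> real" where
  "win_min i = Min (x ` {i + 1 - L..i})"

lemma win_max_ge: "q \<in> {i + 1 - L..i} \<Longrightarrow> x q \<le> win_max i"
  unfolding win_max_def by (intro Max_ge) auto

lemma win_min_le: "q \<in> {i + 1 - L..i} \<Longrightarrow> win_min i \<le> x q"
  unfolding win_min_def by (intro Min_le) auto

lemma win_max_le: "(\<And>q. q \<in> {i + 1 - L..i} \<Longrightarrow> x q \<le> h) \<Longrightarrow> win_max i \<le> h"
  unfolding win_max_def using L_pos by (subst Max_le_iff) auto

lemma win_min_ge: "(\<And>q. q \<in> {i + 1 - L..i} \<Longrightarrow> h \<le> x q) \<Longrightarrow> h \<le> win_min i"
  unfolding win_min_def using L_pos by (subst Min_ge_iff) auto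

lemma win_min_le_x: "win_min i \<le> x i" and x_le_win_max: "x i \<le> win_max i"
  using win_min_le[of i i] win_max_ge[of i i] L_pos by auto

lemma oscillation_contracts:
  assumes "i0 \<le> i"
  shows "win_max (i + L) - win_min (i + L)
    \<le> (1 - \<delta> ^ L) * (win_max i - win_min i) + 4 * tail (i + 1)"
proof -
  interpret neg: convex_recurrence "\<lambda>i. - x i" "\<lambda>i. - e i" w L i0 \<delta> B
    by (rule convex_recurrence_uminus)
  have neg_tail: "neg.tail = tail" unfolding neg.tail_def tail_def by simp
  define t where "t = tail (i + 1)"
  define lo where "lo = win_min i - t"
  define hi where "hi = win_max i + t"
  have t: "0 \<le> t" unfolding t_def by (rule tail_nonneg)
  have d: "0 < \<delta> ^ L" "\<delta> ^ L \<le> \<delta> ^ k" if "k \<le> L" for k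
    using that \<delta>_pos \<delta>_le_1 by (auto simp: power_decreasing)
  (* From x i, the next L terms are pushed at least \<delta>^L (x i - lo) above lo and \<delta>^L (hi - x i)
     below hi; the two gaps add up to \<delta>^L (hi - lo), whatever x i is. *)
  have rise: "lo + \<delta> ^ L * (x i - lo) - t \<le> x (i + k)" if "k \<le> L" for k
  proof -
    have "\<delta> ^ L * (x i - lo) \<le> \<delta> ^ k * (x i - lo)"
      using d[OF that] win_min_le_x[of i] t by (intro mult_right_mono) (auto simp: lo_def)
    then show ?thesis
      using lower_bound_decay[OF assms win_min_le[where i = i], of k] tail_nonneg[of "i + k + 1"]
      unfolding lo_def t_def by linarith
  qed
  have fall: "x (i + k) \<le> hi - \<delta> ^ L * (hi - x i) + t" if "k \<le> L" for k
  proof -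
    have "- win_max i \<le> - x q" if "q \<in> {i + 1 - L..i}" for q
      using win_max_ge[OF that] by simp
    then have "\<delta> ^ k * (- x i - (- win_max i - t)) - (t - tail (i + k + 1))
        \<le> - x (i + k) - (- win_max i - t)"
      using neg.lower_bound_decay[OF assms, of "- win_max i" k] unfolding neg_tail t_def by simp
    moreover have "- x i - (- win_max i - t) = hi - x i" "- x (i + k) - (- win_max i - t) = hi - x (i + k)"
      by (simp_all add: hi_def)
    ultimately have "\<delta> ^ k * (hi - x i) - (t - tail (i + k + 1)) \<le> hi - x (i + k)" by simp
    moreover have "\<delta> ^ L * (hi - x i) \<le> \<delta> ^ k * (hi - x i)"
      using d[OF that] x_le_win_max[of i] t by (intro mult_right_mono) (auto simp: hi_def)
    ultimately show ?thesis using tail_nonneg[of "i + k + 1"] by linarith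
  qed
  have window: "q = i + (q - i)" "q - i \<le> L" if "q \<in> {i + L + 1 - L..i + L}" for q
    using that by auto
  have "lo + \<delta> ^ L * (x i - lo) - t \<le> win_min (i + L)"
    using rise window by (intro win_min_ge) metis
  moreover have "win_max (i + L) \<le> hi - \<delta> ^ L * (hi - x i) + t"
    using fall window by (intro win_max_le) metis
  moreover have "(hi - \<delta> ^ L * (hi - x i) + t) - (lo + \<delta> ^ L * (x i - lo) - t)
      = (1 - \<delta> ^ L) * (win_max i - win_min i) + 4 * t - 2 * \<delta> ^ L * t"
    unfolding lo_def hi_def by (simp add: algebra_simps)
  moreover have "0 \<le> \<delta> ^ L * t" using d[of L] t by simp
  ultimately show ?thesis unfolding t_def by linarith
qed

lemma win_max_Suc_le: "i0 \<le> i \<Longrightarrow> win_max (Suc i) \<le> win_max i + \<bar>e (Suc i)\<bar>"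
proof (rule win_max_le)
  fix q assume i: "i0 \<le> i" and q: "q \<in> {Suc i + 1 - L..Suc i}"
  show "x q \<le> win_max i + \<bar>e (Suc i)\<bar>"
  proof (cases "q = Suc i")
    case True
    have "x (Suc i - j) \<le> win_max i" if "j \<in> {1..L}" for j
      using that by (intro win_max_ge) auto
    then show ?thesis using recurrence_le[of "Suc i" "win_max i"] i True by simp
  next
    case False
    then show ?thesis using q win_max_ge[of q i] by fastforce
  qed
qed

lemma win_min_Suc_ge: "i0 \<le> i \<Longrightarrow> win_min i - \<bar>e (Suc i)\<bar> \<le> win_min (Suc i)"
proof (rule win_min_ge)
  interpret neg: convex_recurrence "\<lambda>i. - x i" "\<lambda>i. - e i" w L i0 \<delta> B
    by (rule convex_recurrence_uminus)
  fix q assume i: "i0 \<le> i" and q: "q \<in> {Suc i + 1 - L..Suc i}"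
  show "win_min i - \<bar>e (Suc i)\<bar> \<le> x q"
  proof (cases "q = Suc i")
    case True
    have "- x (Suc i - j) \<le> - win_min i" if "j \<in> {1..L}" for j
      using that by (simp, intro win_min_le) auto
    then show ?thesis using neg.recurrence_le[of "Suc i" "- win_min i"] i True by simp
  next
    case False
    then show ?thesis using q win_min_le[of q i] by fastforce
  qed
qed

lemma abs_win_max_le: "\<bar>win_max i\<bar> \<le> B"
proof -
  have "win_max i \<le> B" by (intro win_max_le) (metis abs_le_D1 bounded)
  moreover have "- B \<le> win_max i" using bounded[of i] x_le_win_max[of i] by linarith
  ultimately show ?thesis by linarith
qed

lemma abs_win_min_le: "\<bar>win_min i\<bar> \<le> B"
proof -
  have "- B \<le> win_min i" by (intro win_min_ge) (metis abs_le_D2 bounded minus_le_iff)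
  moreover have "win_min i \<le> B" using bounded[of i] win_min_le_x[of i] by linarith
  ultimately show ?thesis by linarith
qed

lemma upper_envelope_convergent: "convergent (\<lambda>i. win_max i + tail (Suc i))"
proof (rule convergent_if_eventually_decreasing_bounded)
  show "win_max (Suc i) + tail (Suc (Suc i)) \<le> win_max i + tail (Suc i)" if "i0 \<le> i" for i
    using win_max_Suc_le[OF that] tail_Suc[of "Suc i"] by simp
  show "\<bar>win_max i + tail (Suc i)\<bar> \<le> B + tail 0" for i
    using abs_win_max_le[of i] tail_nonneg[of "Suc i"] tail_antimono[of 0 "Suc i"] by simp
qed

lemma lower_envelope_convergent: "convergent (\<lambda>i. win_min i - tail (Suc i))"
proof -
  have "convergent (\<lambda>i. - (win_min i - tail (Suc i)))"
  proof (rule convergent_if_eventually_decreasing_bounded)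
    show "- (win_min (Suc i) - tail (Suc (Suc i))) \<le> - (win_min i - tail (Suc i))" if "i0 \<le> i" for i
      using win_min_Suc_ge[OF that] tail_Suc[of "Suc i"] by simp
    show "\<bar>- (win_min i - tail (Suc i))\<bar> \<le> B + tail 0" for i
      using abs_win_min_le[of i] tail_nonneg[of "Suc i"] tail_antimono[of 0 "Suc i"] by simp
  qed
  then show ?thesis by (rule iffD2[OF convergent_minus_iff])
qed

theorem convergent_solution: "convergent x"
proof -
  obtain u where u: "(\<lambda>i. win_max i + tail (Suc i)) \<longlonglongrightarrow> u"
    using upper_envelope_convergent by (auto simp: convergent_def)
  obtain v where v: "(\<lambda>i. win_min i - tail (Suc i)) \<longlonglongrightarrow> v"
    using lower_envelope_convergent by (auto simp: convergent_def)
  have tail_Suc_0: "(\<lambda>i. tail (Suc i)) \<longlonglongrightarrow> 0"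
    using tail_tendsto_0 by (rule LIMSEQ_Suc)
  have max: "win_max \<longlonglongrightarrow> u"
    using tendsto_diff[OF u tail_Suc_0] by simp
  have min: "win_min \<longlonglongrightarrow> v"
    using tendsto_add[OF v tail_Suc_0] by simp
  have osc: "(\<lambda>i. win_max i - win_min i) \<longlonglongrightarrow> u - v"
    by (intro tendsto_diff max min)
  have "(\<lambda>i. win_max (i + L) - win_min (i + L)) \<longlonglongrightarrow> u - v"
    using LIMSEQ_ignore_initial_segment[OF osc] .
  moreover have "(\<lambda>i. (1 - \<delta> ^ L) * (win_max i - win_min i) + 4 * tail (i + 1))
      \<longlonglongrightarrow> (1 - \<delta> ^ L) * (u - v) + 4 * 0"
    using tail_Suc_0 by (intro tendsto_intros osc) simp
  moreover have "\<forall>i\<ge>i0. win_max (i + L) - win_min (i + L)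
      \<le> (1 - \<delta> ^ L) * (win_max i - win_min i) + 4 * tail (i + 1)"
    using oscillation_contracts by blast
  ultimately have "u - v \<le> (1 - \<delta> ^ L) * (u - v)"
    by (intro LIMSEQ_le) auto
  then have "\<delta> ^ L * (u - v) \<le> 0" by (simp add: algebra_simps)
  moreover have "0 \<le> u - v"
  proof (rule LIMSEQ_le_const[OF osc])
    show "\<exists>N. \<forall>n\<ge>N. 0 \<le> win_max n - win_min n"
      using win_min_le_x x_le_win_max by (meson diff_ge_0_iff_ge order_trans)
  qed
  moreover have "0 < \<delta> ^ L" using \<delta>_pos by simp
  ultimately have "u = v" by (simp add: mult_le_0_iff)
  have "\<forall>\<^sub>F i in sequentially. win_min i \<le> x i" "\<forall>\<^sub>F i in sequentially. x i \<le> win_max i"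
    using win_min_le_x x_le_win_max by simp_all
  then have "x \<longlonglongrightarrow> u"
    using tendsto_sandwich min max \<open>u = v\<close> by blast
  then show ?thesis by (auto simp: convergent_def)
qed

end

section \<open>Convergence of the Weyl means\<close>

lemma sum_list_map_eq_sum_count_of_nat:
  fixes h :: "'a \<Rightarrow> 'b::comm_semiring_1"
  assumes "set xs \<subseteq> V" "finite V"
  shows "(\<Sum>x\<leftarrow>xs. h x) = (\<Sum>v\<in>V. of_nat (count_list xs v) * h v)"
  using assms(1)
proof (induction xs)
  case (Cons x xs)
  have "(\<Sum>v\<in>V. of_nat (count_list (x # xs) v) * h v)
      = (\<Sum>v\<in>V. of_nat (count_list xs v) * h v) + (\<Sum>v\<in>V. if x = v then h v else 0)"
    by (auto simp: sum.distrib[symmetric] algebra_simps intro!: sum.cong)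
  also have "(\<Sum>v\<in>V. if x = v then h v else 0) = h x"
    using Cons.prems assms(2) by simp
  finally show ?case using Cons by (simp add: add.commute)
qed simp

lemma sum_list_map_eq_window_sum:
  fixes h :: "nat \<Rightarrow> 'b::comm_semiring_1"
  assumes "L < i" "set xs \<subseteq> {i - L..i - 1}"
  shows "(\<Sum>x\<leftarrow>xs. h x) = (\<Sum>j=1..L. of_nat (count_list xs (i - j)) * h (i - j))"
proof -
  have "(\<Sum>x\<leftarrow>xs. h x) = (\<Sum>v\<in>{i - L..i - 1}. of_nat (count_list xs v) * h v)"
    using assms(2) by (rule sum_list_map_eq_sum_count_of_nat) simp
  also have "\<dots> = (\<Sum>j=1..L. of_nat (count_list xs (i - j)) * h (i - j))"
    by (rule sum.reindex_bij_witness[of _ "\<lambda>j. i - j" "\<lambda>v. i - v"]) (use assms(1) in auto)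
  finally show ?thesis .
qed

lemma count_list_mult_le_sum_list:
  fixes h :: "'a \<Rightarrow> real"
  assumes "\<And>v. 0 \<le> h v"
  shows "real (count_list xs v) * h v \<le> (\<Sum>x\<leftarrow>xs. h x)"
  by (induction xs) (auto simp: distrib_right intro: add_increasing assms)

lemma tendsto_mean_of_linear_approx:
  fixes f :: "nat \<Rightarrow> 'a::real_normed_field"
  assumes "\<And>\<epsilon>. 0 < \<epsilon> \<Longrightarrow> \<exists>C. \<forall>n. norm (f n - z * of_nat n) \<le> C + \<epsilon> * real n"
  shows "(\<lambda>n. f n / of_nat n) \<longlonglongrightarrow> z"
proof (rule LIMSEQ_I)
  fix r :: real assume r: "0 < r"
  obtain C where C: "\<And>n. norm (f n - z * of_nat n) \<le> C + r / 2 * real n"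
    using assms[of "r / 2"] r by auto
  obtain N :: nat where N: "2 * C / r < N" using reals_Archimedean2 by blast
  have "norm (f n / of_nat n - z) < r" if "max 1 N \<le> n" for n
  proof -
    have n: "0 < real n" "2 * C / r < real n" using that N by auto
    have "f n / of_nat n - z = (f n - z * of_nat n) / of_nat n" using n by (simp add: field_simps)
    then have "norm (f n / of_nat n - z) \<le> (C + r / 2 * real n) / real n"
      using C[of n] n by (simp add: norm_divide divide_right_mono)
    also have "\<dots> < r" using n r by (simp add: field_simps)
    finally show ?thesis .
  qed
  then show "\<exists>no. \<forall>n\<ge>no. norm (f n / of_nat n - z) < r" by blast
qed

locale mild_weyl = weyl_setting a b \<alpha> for a b \<alpha> +
  fixes L :: nat and s :: real
  assumes greedy_window: "\<And>n. 2 \<le> n \<Longrightarrow> set (greedy_list a (n - 1) (a n)) \<subseteq> {n - L..n - 1}"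
    and s_gt_1: "1 < s"
    and a_Suc_less: "\<And>n. 1 \<le> n \<Longrightarrow> real (a (Suc n)) < s * real (a n)"
    and summable_\<theta>: "summable \<theta>"
begin

definition digits :: "nat \<Rightarrow> nat list" where
  "digits i = greedy_list a (i - 1) (a i)"

lemma sum_list_digits: "2 \<le> i \<Longrightarrow> (\<Sum>k\<leftarrow>digits i. a k) = a i"
  unfolding digits_def by (rule sum_list_greedy_list) simp

lemma sum_list_digits_real: "2 \<le> i \<Longrightarrow> (\<Sum>k\<leftarrow>digits i. real (a k)) = real (a i)"
  using sum_list_of_nat[of "map a (digits i)"] sum_list_digits[of i] by (simp add: comp_def)

lemma weyl_sum_digits: "2 \<le> i \<Longrightarrow> weyl_sum (a i) = twisted_sum (digits i)"
  unfolding digits_def by (rule weyl_sum_greedy) auto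

lemma digits_window: "2 \<le> i \<Longrightarrow> set (digits i) \<subseteq> {i - L..i - 1}"
  unfolding digits_def by (rule greedy_window)

lemma pred_in_digits: "2 \<le> i \<Longrightarrow> i - 1 \<in> set (digits i)"
  unfolding digits_def using greedy_list_Cons[of "i - 1" "i - 1" "a i"] a_le[of "i - 1" i] by simp

lemma L_pos: "1 \<le> L"
  using digits_window[of 2] pred_in_digits[of 2] by (cases L) auto

lemma a_add_le_pow: "1 \<le> n \<Longrightarrow> real (a (n + k)) \<le> s ^ k * real (a n)"
proof (induction k)
  case (Suc k)
  have "real (a (n + Suc k)) \<le> s * real (a (n + k))" using a_Suc_less[of "n + k"] Suc.prems by simp
  also have "\<dots> \<le> s * (s ^ k * real (a n))" using Suc s_gt_1 by (intro mult_left_mono) auto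
  finally show ?case by (simp add: mult_ac)
qed simp

lemma count_digits_le:
  assumes "L + 2 \<le> i" "v \<in> {i - L..i - 1}"
  shows "real (count_list (digits i) v) \<le> s ^ L"
proof -
  have "real (count_list (digits i) v) * real (a v) \<le> (\<Sum>k\<leftarrow>digits i. real (a k))"
    by (rule count_list_mult_le_sum_list) simp
  also have "\<dots> = real (a i)"
    using sum_list_digits_real[of i] assms by simp
  also have "\<dots> \<le> s ^ L * real (a (i - L))" using a_add_le_pow[of "i - L" L] assms by simp
  also have "\<dots> \<le> s ^ L * real (a v)" using assms a_le[of "i - L" v] s_gt_1 by (intro mult_left_mono) auto
  finally have "real (count_list (digits i) v) * real (a v) \<le> s ^ L * real (a v)" .
  moreover have "0 < a v" using assms by (intro a_pos) auto
  ultimately show ?thesis by simp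
qed

definition block_mean :: "nat \<Rightarrow> complex" where
  "block_mean i = weyl_sum (a i) / of_nat (a i)"

definition weight :: "nat \<Rightarrow> nat \<Rightarrow> real" where
  "weight i j = real (count_list (digits i) (i - j)) * real (a (i - j)) / real (a i)"

definition defect :: "nat \<Rightarrow> complex" where
  "defect i = block_mean i - (\<Sum>j=1..L. of_real (weight i j) * block_mean (i - j))"

lemma norm_block_mean_le: "norm (block_mean i) \<le> 1"
  using norm_weyl_sum_le[of "a i"] by (cases "a i = 0") (simp_all add: block_mean_def norm_divide)

lemma weight_nonneg: "0 \<le> weight i j"
  by (simp add: weight_def)

lemma sum_weight: "L + 2 \<le> i \<Longrightarrow> (\<Sum>j=1..L. weight i j) = 1"
proof -
  assume i: "L + 2 \<le> i"
  have "(\<Sum>j=1..L. real (count_list (digits i) (i - j)) * real (a (i - j))) = (\<Sum>k\<leftarrow>digits i. real (a k))"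
    using sum_list_map_eq_window_sum[of L i "digits i" "\<lambda>k. real (a k)"] digits_window[of i] i by simp
  also have "\<dots> = real (a i)"
    using sum_list_digits_real[of i] i by simp
  finally show ?thesis using a_pos[of i] i by (simp add: weight_def sum_divide_distrib[symmetric])
qed

lemma lead_weight_ge: "L + 2 \<le> i \<Longrightarrow> 1 / s \<le> weight i 1"
proof -
  assume i: "L + 2 \<le> i"
  have ai: "0 < real (a i)" using a_pos[of i] i by simp
  have "real (a i) < s * real (a (i - 1))" using a_Suc_less[of "i - 1"] i by simp
  then have "1 / s \<le> real (a (i - 1)) / real (a i)"
    using ai s_gt_1 by (simp add: field_simps)
  also have "\<dots> \<le> real (count_list (digits i) (i - 1)) * real (a (i - 1)) / real (a i)"
    using pred_in_digits[of i] i ai count_list_0_iff[of "digits i" "i - 1"]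
    by (intro divide_right_mono) (auto simp: mult_le_cancel_right1)
  finally show ?thesis unfolding weight_def .
qed

lemma norm_defect_le:
  assumes i: "L + 2 \<le> i"
  shows "norm (defect i) \<le> 2 * pi * s ^ L * (\<Sum>j=1..L. \<theta> (i - j))"
proof -
  have ai: "0 < real (a i)" using a_pos i by simp
  have "(\<Sum>j=1..L. of_real (weight i j) * block_mean (i - j))
      = (\<Sum>j=1..L. of_nat (count_list (digits i) (i - j)) * weyl_sum (a (i - j))) / of_nat (a i)"
    unfolding sum_divide_distrib
  proof (rule sum.cong[OF refl])
    fix j assume "j \<in> {1..L}"
    then have "0 < a (i - j)" using i by (intro a_pos) auto
    then show "of_real (weight i j) * block_mean (i - j)
        = of_nat (count_list (digits i) (i - j)) * weyl_sum (a (i - j)) / of_nat (a i)"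
      unfolding weight_def block_mean_def by (simp add: field_simps)
  qed
  also have "(\<Sum>j=1..L. of_nat (count_list (digits i) (i - j)) * weyl_sum (a (i - j)))
      = (\<Sum>k\<leftarrow>digits i. weyl_sum (a k))"
    using sum_list_map_eq_window_sum[of L i "digits i" "\<lambda>k. weyl_sum (a k)"] digits_window[of i] i
    by simp
  finally have "defect i = (twisted_sum (digits i) - (\<Sum>k\<leftarrow>digits i. weyl_sum (a k))) / of_nat (a i)"
    using weyl_sum_digits[of i] i unfolding defect_def block_mean_def
    by (simp add: diff_divide_distrib)
  then have "norm (defect i) \<le> (\<Sum>k\<leftarrow>digits i. 2 * pi * \<theta> k)"
    using twisted_sum_approx[of "digits i"] sum_list_digits[of i] ai i
    by (simp add: norm_divide pos_divide_le_eq)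
  also have "\<dots> = (\<Sum>j=1..L. of_nat (count_list (digits i) (i - j)) * (2 * pi * \<theta> (i - j)))"
    using sum_list_map_eq_window_sum[of L i "digits i" "\<lambda>k. 2 * pi * \<theta> k"] digits_window[of i] i
    by simp
  also have "\<dots> \<le> (\<Sum>j=1..L. s ^ L * (2 * pi * \<theta> (i - j)))"
  proof (intro sum_mono mult_right_mono)
    fix j assume "j \<in> {1..L}"
    then show "of_nat (count_list (digits i) (i - j)) \<le> s ^ L" using i by (intro count_digits_le) auto
  qed simp
  also have "\<dots> = 2 * pi * s ^ L * (\<Sum>j=1..L. \<theta> (i - j))"
    by (simp add: sum_distrib_left mult_ac)
  finally show ?thesis .
qed

lemma summable_defect_bound: "summable (\<lambda>i. 2 * pi * s ^ L * (\<Sum>j=1..L. \<theta> (i - j)))"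
proof -
  have "summable (\<lambda>i. \<theta> (i - j))" for j
    using summable_\<theta> summable_iff_shift[of "\<lambda>i. \<theta> (i - j)" j] by simp
  then show ?thesis by (intro summable_mult summable_sum)
qed

lemma block_mean_recurrence:
  "block_mean i = (\<Sum>j=1..L. of_real (weight i j) * block_mean (i - j)) + defect i"
  unfolding defect_def by simp

lemma convergent_block_mean: "convergent block_mean"
proof -
  have linear_image: "convex_recurrence (\<lambda>i. f (block_mean i)) (\<lambda>i. f (defect i)) weight L (L + 2) (1 / s) 1"
    if f_abs: "\<And>z. \<bar>f z\<bar> \<le> norm z" and f_add: "\<And>w z. f (w + z) = f w + f z"
      and f_scale: "\<And>r z. f (of_real r * z) = r * f z"
      and f_sum: "\<And>h A. f (sum h (A :: nat set)) = (\<Sum>j\<in>A. f (h j))"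
    for f :: "complex \<Rightarrow> real"
  proof
    have "\<bar>f (defect i)\<bar> \<le> 2 * pi * s ^ L * (\<Sum>j=1..L. \<theta> (i - j))" if "L + 2 \<le> i" for i
      using f_abs[of "defect i"] norm_defect_le[OF that] by linarith
    then show "summable (\<lambda>i. \<bar>f (defect i)\<bar>)"
      by (intro summable_comparison_test'[OF summable_defect_bound, of "L + 2"]) simp
    show "f (block_mean i) = (\<Sum>j = 1..L. weight i j * f (block_mean (i - j))) + f (defect i)" for i
      using arg_cong[OF block_mean_recurrence[of i], of f] by (simp add: f_add f_scale f_sum)
    show "\<bar>f (block_mean i)\<bar> \<le> 1" for i
      using f_abs[of "block_mean i"] norm_block_mean_le[of i] by linarith
    show "0 < 1 / s" "1 / s \<le> 1" using s_gt_1 by simp_all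
    show "1 \<le> L" by (rule L_pos)
    show "0 \<le> weight i j" for i j by (rule weight_nonneg)
    show "(\<Sum>j=1..L. weight i j) = 1" if "L + 2 \<le> i" for i using that by (rule sum_weight)
    show "1 / s \<le> weight i 1" if "L + 2 \<le> i" for i using that by (rule lead_weight_ge)
  qed simp
  have "convex_recurrence (\<lambda>i. Re (block_mean i)) (\<lambda>i. Re (defect i)) weight L (L + 2) (1 / s) 1"
    by (rule linear_image) (simp_all add: abs_Re_le_cmod)
  moreover have "convex_recurrence (\<lambda>i. Im (block_mean i)) (\<lambda>i. Im (defect i)) weight L (L + 2) (1 / s) 1"
    by (rule linear_image) (simp_all add: abs_Im_le_cmod)
  ultimately have "convergent (\<lambda>i. Re (block_mean i))" "convergent (\<lambda>i. Im (block_mean i))"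
    by (simp_all add: convex_recurrence.convergent_solution)
  then obtain p q where "(\<lambda>i. Re (block_mean i)) \<longlonglongrightarrow> p" "(\<lambda>i. Im (block_mean i)) \<longlonglongrightarrow> q"
    by (auto simp: convergent_def)
  then have "(\<lambda>i. Complex (Re (block_mean i)) (Im (block_mean i))) \<longlonglongrightarrow> Complex p q"
    by (intro tendsto_Complex)
  then show ?thesis by (auto simp: convergent_def)
qed

lemma weyl_sum_deviation_step:
  assumes k: "1 \<le> k" "a k \<le> M" "M < a (Suc k)" and z: "norm z \<le> 1"
  shows "norm (weyl_sum M - z * of_nat M)
    \<le> (norm (block_mean k - z) + 2 * pi * s * \<theta> k) * real (a k)
       + norm (weyl_sum (M - a k) - z * of_nat (M - a k))"
proof -
  define M' where "M' = M - a k"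
  have M: "M = a k + M'" using k by (simp add: M'_def)
  have "weyl_sum M = weyl_sum (a k) + twist k * weyl_sum M'"
    unfolding M'_def using k by (intro weyl_sum_split) auto
  moreover have "weyl_sum (a k) = block_mean k * of_nat (a k)"
    using a_pos[OF k(1)] by (simp add: block_mean_def)
  ultimately have "weyl_sum M - z * of_nat M = (block_mean k - z) * of_nat (a k)
      + twist k * (weyl_sum M' - z * of_nat M') + (twist k - 1) * z * of_nat M'"
    by (simp add: M algebra_simps)
  then have "norm (weyl_sum M - z * of_nat M) \<le> norm ((block_mean k - z) * of_nat (a k))
      + norm (twist k * (weyl_sum M' - z * of_nat M')) + norm ((twist k - 1) * z * of_nat M')"
    by (simp only:) (rule norm_triangle_le, rule add_mono[OF norm_triangle_ineq order_refl])
  also have "\<dots> = norm (block_mean k - z) * real (a k)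
      + norm (weyl_sum M' - z * of_nat M') + norm (twist k - 1) * norm z * real M'"
    by (simp add: norm_mult)
  also have "norm (twist k - 1) * norm z * real M' \<le> 2 * pi * \<theta> k * 1 * (s * real (a k))"
  proof (intro mult_mono)
    have "real M' < real (a (Suc k))" using k by (simp add: M'_def)
    also have "\<dots> < s * real (a k)" using a_Suc_less k by simp
    finally show "real M' \<le> s * real (a k)" by simp
  qed (use z norm_twist_minus_one_le in auto)
  finally show ?thesis by (simp add: M'_def algebra_simps)
qed

lemma weyl_sum_linear_approx:
  assumes K: "1 \<le> K" and \<epsilon>: "0 \<le> \<epsilon>" and z: "norm z \<le> 1"
    and close: "\<And>k. K \<le> k \<Longrightarrow> norm (block_mean k - z) + 2 * pi * s * \<theta> k \<le> \<epsilon>"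
  shows "norm (weyl_sum M - z * of_nat M) \<le> 2 * real (a K) + \<epsilon> * real M"
proof (induction M rule: less_induct)
  case (less M)
  show ?case
  proof (cases "M < a K")
    case True
    have "norm (weyl_sum M - z * of_nat M) \<le> real M + real M"
      using norm_weyl_sum_le[of M] z
      by (intro order_trans[OF norm_triangle_ineq4] add_mono) (auto simp: norm_mult mult_left_le_one_le)
    moreover have "real M < real (a K)" "0 \<le> \<epsilon> * real M" using True \<epsilon> by simp_all
    ultimately show ?thesis by linarith
  next
    case False
    then have "0 < M" using a_pos[OF K] by linarith
    then obtain k where k: "1 \<le> k" "a k \<le> M" "M < a (Suc k)"
      by (rule bracketing_index_exists)
    have "K \<le> k"
    proof (rule ccontr)
      assume "\<not> K \<le> k"
      then have "a (Suc k) \<le> a K" using k by (intro a_le) auto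
      then show False using False k by simp
    qed
    then have "(norm (block_mean k - z) + 2 * pi * s * \<theta> k) * real (a k) \<le> \<epsilon> * real (a k)"
      using close by (intro mult_right_mono) auto
    moreover have "norm (weyl_sum (M - a k) - z * of_nat (M - a k))
        \<le> 2 * real (a K) + \<epsilon> * real (M - a k)"
      by (rule less.IH) (use a_pos[OF k(1)] k in simp)
    moreover have "\<epsilon> * real (M - a k) = \<epsilon> * real M - \<epsilon> * real (a k)"
      using k by (simp add: right_diff_distrib)
    ultimately show ?thesis using weyl_sum_deviation_step[OF k z] by linarith
  qed
qed

theorem weyl_mean_convergent: "\<exists>z. (\<lambda>n. weyl_sum n / of_nat n) \<longlonglongrightarrow> z"
proof -
  obtain z where z: "block_mean \<longlonglongrightarrow> z" using convergent_block_mean by (auto simp: convergent_def)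
  have norm_z: "norm z \<le> 1"
    using tendsto_norm[OF z] norm_block_mean_le by (intro LIMSEQ_le_const2) auto
  have "(\<lambda>k. norm (block_mean k - z) + 2 * pi * s * \<theta> k) \<longlonglongrightarrow> 0"
  proof (rule tendsto_add_zero)
    show "(\<lambda>k. norm (block_mean k - z)) \<longlonglongrightarrow> 0"
      using z by (simp add: tendsto_norm_zero_iff LIM_zero_iff)
    show "(\<lambda>k. 2 * pi * s * \<theta> k) \<longlonglongrightarrow> 0"
      using summable_LIMSEQ_zero[OF summable_\<theta>] by (rule tendsto_mult_right_zero)
  qed
  have "(\<lambda>n. weyl_sum n / of_nat n) \<longlonglongrightarrow> z"
  proof (rule tendsto_mean_of_linear_approx)
    fix \<epsilon> :: real assume "0 < \<epsilon>"
    then obtain K where K: "\<And>k. K \<le> k \<Longrightarrow> norm (block_mean k - z) + 2 * pi * s * \<theta> k < \<epsilon>"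
      using order_tendstoD(2)[OF \<open>_ \<longlonglongrightarrow> 0\<close> \<open>0 < \<epsilon>\<close>] unfolding eventually_sequentially by blast
    have "norm (weyl_sum n - z * of_nat n) \<le> 2 * real (a (max 1 K)) + \<epsilon> * real n" for n
      using norm_z \<open>0 < \<epsilon>\<close> K by (intro weyl_sum_linear_approx) (auto intro: less_imp_le)
    then show "\<exists>C. \<forall>n. norm (weyl_sum n - z * of_nat n) \<le> C + \<epsilon> * real n" by blast
  qed
  then show ?thesis by blast
qed

end

theorem mainTheorem5:
  fixes a :: "nat \<Rightarrow> nat" and b :: "nat \<Rightarrow> int" and \<alpha> :: real
  assumes "mild_signature a"
    and "summable (\<lambda>i. dist_int (\<alpha> * of_int (b (Suc i))))"
  shows "\<exists>z::complex. (\<lambda>n. (\<Sum>i<n. ee (\<alpha> * of_int (replacement a b i))) / of_nat n)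
            \<longlonglongrightarrow> z"
proof -
  obtain L s where base: "a 1 = 1" "strict_mono_on {1..} a"
    and mild: "\<forall>n\<ge>2. set (greedy_list a (n - 1) (a n)) \<subseteq> {n - L..n - 1}"
      "s > 1" "\<forall>n\<ge>1. real (a (Suc n)) < s * real (a n)"
    using assms(1) unfolding mild_signature_def by blast
  have summable_dist: "summable (\<lambda>k. dist_int (\<alpha> * of_int (b k)))"
    using assms(2) by (subst summable_Suc_iff[symmetric])
  interpret weyl_setting a b \<alpha>
    by unfold_locales (fact base)+
  interpret mild_weyl a b \<alpha> L s
    by unfold_locales (use mild summable_dist in \<open>auto simp: \<theta>_def[abs_def]\<close>)
  show ?thesis using weyl_mean_convergent unfolding weyl_sum_def .
qed

end
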